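(* Let $R$ be a commutative ring with unity in which every zero divisor is harmless, and let $r\in R$ be a non-zero, non-unit element. Then the following are equivalent: (i) $r$ is irreducible; (ii) $r$ is B-irreducible; (iii) $r$ is F-irreducible.
   Context: A zero divisor $r$ of $R$ is called harmless if there exists a unit $u\in R$ with $r=1-u$. An element $r\in R$ is called irreducible if whenever $r=ab$ with $a,b\in R$, then $a$ is a unit or $b$ is a unit. A non-zero, non-unit element $r\in R$ is called B-irreducible if the principal ideal $(r)$ is a maximal element, with respect to inclusion, of the set of all proper principal ideals of $R$. A factorization of $r$ is an expression $r=a_1\cdots a_n$ with $a_i\in R$; a refinement of this factorization is a factorization obtained by replacing one or more of the factors $a_i$ by a factorization of $a_i$. A non-unit element $r\in R$ is called F-irreducible if every factorization of $r$ has a refinement in which $r$ appears as one of the new factors. *)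

theory Defs
  imports "HOL-Computational_Algebra.Factorial_Ring"
begin

definition zero_divisor :: "'a::comm_ring_1 \<Rightarrow> bool" where
  "zero_divisor z \<longleftrightarrow> (\<exists>s. s \<noteq> 0 \<and> z * s = 0)"

definition harmless :: "'a::comm_ring_1 \<Rightarrow> bool" where
  "harmless z \<longleftrightarrow> zero_divisor z \<and> (\<exists>u. u dvd 1 \<and> z = 1 - u)"

definition pideal :: "'a::comm_ring_1 \<Rightarrow> 'a set" where
  "pideal r = {r * x | x. True}"

definition B_irreducible :: "'a::comm_ring_1 \<Rightarrow> bool" where
  "B_irreducible r \<longleftrightarrow> r \<noteq> 0 \<and> \<not> r dvd 1 \<and> pideal r \<noteq> UNIV \<and>
     (\<forall>s. pideal s \<noteq> UNIV \<and> pideal r \<subseteq> pideal s \<longrightarrow> pideal s = pideal r)"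

definition factorization :: "'a::comm_ring_1 \<Rightarrow> 'a list \<Rightarrow> bool" where
  "factorization r as \<longleftrightarrow> as \<noteq> [] \<and> prod_list as = r"

text \<open>A refinement of the factorization as: each factor as!i is replaced by a
  factorization bss!i of it (possibly the trivial one [as!i]); the refined
  factorization is concat bss.\<close>
definition refinement :: "'a::comm_ring_1 list \<Rightarrow> 'a list list \<Rightarrow> bool" where
  "refinement as bss \<longleftrightarrow> length bss = length as \<and>
     (\<forall>i < length as. factorization (as ! i) (bss ! i))"

definition F_irreducible :: "'a::comm_ring_1 \<Rightarrow> bool" where
  "F_irreducible r \<longleftrightarrow> \<not> r dvd 1 \<and>
     (\<forall>as. factorization r as \<longrightarrow>
        (\<exists>bss. refinement as bss \<and> r \<in> set (concat bss)))"

end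

theory Submission
  imports Defs
begin

text \<open>An irreducible element is B- and F-irreducible in any commutative ring: in a
  factorization \<open>r = a\<^sub>1 \<cdots> a\<^sub>n\<close> all factors but one are units, and that one is a
  multiple of \<open>r\<close>. For the converse, B- and F-irreducibility both say that in every
  factorization \<open>r = a b\<close> one factor, say \<open>a = r c\<close>, is a multiple of \<open>r\<close>. Then
  \<open>(1 - c b) r = 0\<close>, so \<open>1 - c b\<close> is a zero divisor; being harmless, it equals \<open>1 - u\<close> for a
  unit \<open>u\<close>, so \<open>c b = u\<close> and \<open>b\<close> is a unit.\<close>

lemma pideal_eq_UNIV_iff: "pideal (s::'a::comm_ring_1) = UNIV \<longleftrightarrow> s dvd 1"
proof
  assume "pideal s = UNIV"
  then have "1 \<in> pideal s" by simp
  then show "s dvd 1" unfolding pideal_def by (auto intro: dvdI)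
next
  assume "s dvd 1"
  then obtain k where "1 = s * k" by (auto elim: dvdE)
  then have "y \<in> pideal s" for y
    unfolding pideal_def by (auto intro!: exI[of _ "k * y"] simp: mult.assoc[symmetric])
  then show "pideal s = UNIV" by auto
qed

lemma pideal_subset_iff: "pideal (r::'a::comm_ring_1) \<subseteq> pideal s \<longleftrightarrow> s dvd r"
proof
  assume "pideal r \<subseteq> pideal s"
  moreover have "r \<in> pideal r" unfolding pideal_def by (auto intro: exI[of _ 1])
  ultimately show "s dvd r" unfolding pideal_def by (auto intro: dvdI)
next
  assume "s dvd r"
  then obtain k where "r = s * k" by (auto elim: dvdE)
  then show "pideal r \<subseteq> pideal s" unfolding pideal_def by (auto simp: mult.assoc)
qed

lemma B_irreducible_iff:
  "B_irreducible (r::'a::comm_ring_1) \<longleftrightarrow>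
     r \<noteq> 0 \<and> \<not> r dvd 1 \<and> (\<forall>s. \<not> s dvd 1 \<and> s dvd r \<longrightarrow> r dvd s)"
proof -
  have "pideal s = pideal r \<longleftrightarrow> r dvd s \<and> s dvd r" for s
    unfolding set_eq_subset pideal_subset_iff ..
  then show ?thesis
    unfolding B_irreducible_def pideal_eq_UNIV_iff pideal_subset_iff by auto
qed

lemma unit_mult_dvd:
  fixes u x :: "'a::comm_ring_1"
  assumes "u dvd 1"
  shows "u * x dvd x"
proof -
  obtain v where "1 = u * v" using assms by (auto elim: dvdE)
  then have "x = u * x * v" by (metis mult.commute mult.left_commute mult_1_right)
  then show ?thesis by (rule dvdI)
qed

lemma irreducible_imp_B_irreducible:
  fixes r :: "'a::comm_ring_1"
  assumes "irreducible r"
  shows "B_irreducible r"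
  unfolding B_irreducible_iff
proof (intro conjI allI impI)
  fix s assume s: "\<not> s dvd 1 \<and> s dvd r"
  then obtain t where t: "r = s * t" by (auto elim: dvdE)
  with assms s have "t dvd 1" by (auto simp: irreducible_def)
  then show "r dvd s" using unit_mult_dvd[of t s] by (simp add: t mult.commute)
qed (use assms in \<open>auto simp: irreducible_def\<close>)

lemma irreducible_prod_list_dvd_factor:
  fixes as :: "'a::comm_ring_1 list"
  assumes "irreducible (prod_list as)"
  shows "\<exists>a\<in>set as. prod_list as dvd a"
  using assms
proof (induction as)
  case (Cons a rest)
  then have "a dvd 1 \<and> irreducible (prod_list rest) \<or> prod_list rest dvd 1"
    by (auto dest: irreducible_multD)
  then show ?case
  proof
    assume *: "a dvd 1 \<and> irreducible (prod_list rest)"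
    with Cons.IH obtain b where "b \<in> set rest" "prod_list rest dvd b" by blast
    moreover have "a * prod_list rest dvd prod_list rest" using * by (simp add: unit_mult_dvd)
    ultimately show ?case by (auto dest: dvd_trans)
  next
    assume "prod_list rest dvd 1"
    then show ?case using unit_mult_dvd[of "prod_list rest" a] by (auto simp: mult.commute)
  qed
qed simp

lemma refinement_replacing:
  fixes as :: "'a::comm_ring_1 list"
  assumes "a \<in> set as" and "factorization a bs"
  shows "\<exists>bss. refinement as bss \<and> set bs \<subseteq> set (concat bss)"
proof (intro exI conjI)
  let ?bss = "map (\<lambda>b. if b = a then bs else [b]) as"
  show "refinement as ?bss"
    using assms(2) by (auto simp: refinement_def factorization_def)
  show "set bs \<subseteq> set (concat ?bss)"
    using assms(1) by force
qed

lemma refinement_factor_dvd: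
  fixes as :: "'a::comm_ring_1 list"
  assumes "refinement as bss" and "x \<in> set (concat bss)"
  shows "\<exists>a\<in>set as. x dvd a"
proof -
  obtain bs where "bs \<in> set bss" "x \<in> set bs" using assms(2) by auto
  then obtain i where i: "i < length bss" "x \<in> set (bss ! i)" by (auto simp: in_set_conv_nth)
  with assms(1) have "factorization (as ! i) (bss ! i)" "i < length as"
    by (auto simp: refinement_def)
  with i show ?thesis
    by (metis factorization_def nth_mem prod_list_dvd)
qed

lemma irreducible_imp_F_irreducible:
  fixes r :: "'a::comm_ring_1"
  assumes "irreducible r"
  shows "F_irreducible r"
  unfolding F_irreducible_def
proof (intro conjI allI impI)
  fix as assume "factorization r as"
  then have "prod_list as = r" by (simp add: factorization_def)
  with assms irreducible_prod_list_dvd_factor obtain a c where "a \<in> set as" "a = r * c"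
    by (metis dvdE)
  then have "factorization a [r, c]" by (simp add: factorization_def)
  with \<open>a \<in> set as\<close> obtain bss where "refinement as bss" "set [r, c] \<subseteq> set (concat bss)"
    using refinement_replacing by blast
  then show "\<exists>bss. refinement as bss \<and> r \<in> set (concat bss)" by auto
qed (use assms irreducible_not_unit in blast)

lemma unit_if_self_mult_eq:
  fixes r :: "'a::comm_ring_1"
  assumes "\<forall>z::'a. zero_divisor z \<longrightarrow> harmless z" and "r \<noteq> 0" and "r * x = r"
  shows "x dvd 1"
proof -
  have "(1 - x) * r = 0" using assms(3) by (simp add: algebra_simps)
  with assms(1,2) have "harmless (1 - x)" unfolding zero_divisor_def by blast
  then obtain u where "u dvd 1" "1 - x = 1 - u" unfolding harmless_def by blast
  then show ?thesis by simp
qed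

lemma irreducibleI_dvd_factor:
  fixes r :: "'a::comm_ring_1"
  assumes harmless: "\<forall>z::'a. zero_divisor z \<longrightarrow> harmless z"
    and "r \<noteq> 0" and "\<not> r dvd 1"
    and dvd_factor: "\<And>a b. r = a * b \<Longrightarrow> r dvd a \<or> r dvd b"
  shows "irreducible r"
proof -
  have cofactor_unit: "b dvd 1" if "r = a * b" "r dvd a" for a b
  proof -
    from \<open>r dvd a\<close> obtain c where "a = r * c" by (auto elim: dvdE)
    with \<open>r = a * b\<close> have "r * (c * b) = r" by (simp add: mult.assoc)
    with harmless \<open>r \<noteq> 0\<close> have "c * b dvd 1" by (rule unit_if_self_mult_eq)
    then show "b dvd 1" by (rule dvd_mult_right)
  qed
  show ?thesis
  proof (rule irreducibleI)
    fix a b assume "r = a * b"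
    then show "a dvd 1 \<or> b dvd 1"
      using dvd_factor cofactor_unit[of a b] cofactor_unit[of b a] by (auto simp: mult.commute)
  qed (use assms in auto)
qed

lemma B_irreducible_imp_irreducible:
  fixes r :: "'a::comm_ring_1"
  assumes harmless: "\<forall>z::'a. zero_divisor z \<longrightarrow> harmless z" and B: "B_irreducible r"
  shows "irreducible r"
proof (rule irreducibleI_dvd_factor[OF harmless])
  fix a b assume r: "r = a * b"
  show "r dvd a \<or> r dvd b"
  proof (cases "a dvd 1")
    case True
    then show ?thesis using unit_mult_dvd[of a b] by (simp add: r)
  next
    case False
    then show ?thesis using B r by (simp add: B_irreducible_iff)
  qed
qed (use B in \<open>simp_all add: B_irreducible_iff\<close>)

lemma F_irreducible_imp_irreducible:
  fixes r :: "'a::comm_ring_1"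
  assumes harmless: "\<forall>z::'a. zero_divisor z \<longrightarrow> harmless z"
    and "r \<noteq> 0" and F: "F_irreducible r"
  shows "irreducible r"
proof (rule irreducibleI_dvd_factor[OF harmless \<open>r \<noteq> 0\<close>])
  fix a b assume "r = a * b"
  then have "factorization r [a, b]" by (simp add: factorization_def)
  with F obtain bss where "refinement [a, b] bss" "r \<in> set (concat bss)"
    unfolding F_irreducible_def by blast
  then show "r dvd a \<or> r dvd b" using refinement_factor_dvd by fastforce
qed (use F in \<open>simp add: F_irreducible_def\<close>)

theorem mainTheorem5:
  fixes r :: "'a::comm_ring_1"
  assumes all_harmless: "\<forall>z::'a. zero_divisor z \<longrightarrow> harmless z"
    and r_nonzero: "r \<noteq> 0"
    and r_nonunit: "\<not> r dvd 1"
  shows "(irreducible r \<longleftrightarrow> B_irreducible r) \<and> (B_irreducible r \<longleftrightarrow> F_irreducible r)"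
  using irreducible_imp_B_irreducible B_irreducible_imp_irreducible[OF all_harmless]
    irreducible_imp_F_irreducible F_irreducible_imp_irreducible[OF all_harmless r_nonzero]
  by blast

end
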